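(* Let $n$ be a positive integer and let $c\geq 2$ be an integer whose smallest prime factor $p_1$ satisfies $p_1>(n+1)^2/4$. Then there is no arithmetical structure $(r_1,\dots,r_n)$ on $K_n$ with $r_1=c$.
   Context: An arithmetical structure on the complete graph $K_n$ is an $n$-tuple $(r_1,r_2,\dots,r_n)$ of positive integers with $\gcd(r_1,\dots,r_n)=1$ such that $r_j$ divides $\sum_{i=1}^n r_i$ for every $j$. The entries are always listed so that $r_1\geq r_2\geq\dots\geq r_n$; thus $r_1$ is the largest value of the structure. *)

theory Defs
  imports Complex_Main "HOL-Computational_Algebra.Primes"
begin

text \<open>An arithmetical structure on the complete graph K_n, given as a list
  r = [r_1, ..., r_n] (r_1 = r ! 0) of positive integers listed in
  non-increasing order, with gcd 1, each entry dividing the total sum.\<close>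
definition arith_struct_Kn :: "nat \<Rightarrow> nat list \<Rightarrow> bool" where
  "arith_struct_Kn n r \<longleftrightarrow>
     length r = n \<and>
     (\<forall>i<n. 0 < r ! i) \<and>
     sorted_wrt (\<ge>) r \<and>
     Gcd (set r) = 1 \<and>
     (\<forall>j<n. r ! j dvd sum_list r)"

definition smallest_prime_factor :: "nat \<Rightarrow> nat" where
  "smallest_prime_factor c = Min (prime_factors c)"

end

theory Submission
  imports Defs
begin

text \<open>Let \<open>S = k c\<close> be the sum of the structure and split off the \<open>n - m\<close> entries equal to
  \<open>c\<close>; some entry is smaller, since the gcd is \<open>1\<close>. An entry \<open>x < c\<close> divides \<open>S\<close>, so
  \<open>x \<cdot> c / gcd x c = lcm x c\<close> divides \<open>S\<close>; as \<open>c / gcd x c > 1\<close> divides \<open>c\<close>, we get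
  \<open>p x \<le> S\<close> with \<open>p\<close> the smallest prime factor of \<open>c\<close>. Summing over the \<open>m\<close> small entries
  gives \<open>p (k - (n - m)) \<le> m k\<close>, whence \<open>p \<le> m (n + 1 - m) \<le> (n + 1)\<^sup>2 / 4\<close>.\<close>

lemma smallest_prime_factor_le:
  assumes "c \<noteq> 0" "e dvd c" "1 < e"
  shows "smallest_prime_factor c \<le> e"
proof -
  obtain q where q: "prime q" "q dvd e"
    using prime_factor_nat[of e] assms(3) by auto
  then have "q \<in> prime_factors c"
    using assms by (auto simp: in_prime_factors_iff intro: dvd_trans)
  then have "smallest_prime_factor c \<le> q"
    unfolding smallest_prime_factor_def by simp
  also have "q \<le> e"
    using q assms(3) by (simp add: dvd_imp_le)
  finally show ?thesis .
qed

lemma smallest_prime_factor_mult_le_common_multiple: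
  fixes x c N :: nat
  assumes "x dvd N" "c dvd N" "0 < N" "0 < x" "x < c"
  shows "smallest_prime_factor c * x \<le> N"
proof -
  define q where "q = c div gcd x c"
  have c_eq: "c = gcd x c * q"
    unfolding q_def by simp
  have "gcd x c \<le> x"
    using assms(4) by simp
  then have "1 < q"
    using c_eq assms(5) by (metis le_less_trans less_one linorder_neqE_nat mult.right_neutral
        mult_0_right not_less)
  moreover have "q dvd c"
    using c_eq by (metis dvd_triv_right)
  ultimately have "smallest_prime_factor c \<le> q"
    using smallest_prime_factor_le assms(5) by simp
  then have "smallest_prime_factor c * x \<le> q * x"
    by simp
  also have "q * x = lcm x c"
    using prod_gcd_lcm_nat[of x c] c_eq assms(4) by (metis mult.assoc mult.commute
        mult_cancel_left gcd_eq_0_iff less_numeral_extra(3))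
  also have "lcm x c \<le> N"
    using assms(1-3) by (simp add: dvd_imp_le)
  finally show ?thesis .
qed

lemma sum_list_filter_add_filter_not:
  "sum_list (filter P xs) + sum_list (filter (\<lambda>x. \<not> P x) xs) = (sum_list xs :: 'a::comm_monoid_add)"
  by (induction xs) (simp_all add: ac_simps)

lemma four_mult_diff_le_square:
  fixes m N :: nat
  assumes "m \<le> N"
  shows "4 * (m * (N - m)) \<le> N\<^sup>2"
proof -
  have "int (4 * (m * (N - m))) + (int N - 2 * int m)\<^sup>2 = (int N)\<^sup>2"
    using assms by (simp add: power2_eq_square algebra_simps)
  then show ?thesis
    by (metis le_add_same_cancel1 of_nat_le_iff of_nat_power zero_le_power2)
qed

lemma mult_le_of_mult_le_add:
  fixes p j k m :: nat
  assumes "j < k" "p * k \<le> p * j + m * k"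
  shows "p \<le> m * (j + 1)"
proof -
  define a where "a = k - j"
  have "0 < a" and k: "k = j + a"
    using assms(1) unfolding a_def by simp_all
  have "p * a \<le> m * a + m * j"
    using assms(2) unfolding k by (simp add: algebra_simps)
  also have "\<dots> \<le> m * a + m * j * a"
    using \<open>0 < a\<close> by simp
  also have "\<dots> = m * (j + 1) * a"
    by (simp add: algebra_simps)
  finally show ?thesis
    using \<open>0 < a\<close> by simp
qed

lemma arith_struct_Kn_le_head:
  assumes "arith_struct_Kn n r" "x \<in> set r"
  shows "x \<le> r ! 0"
proof -
  obtain i where i: "i < length r" "x = r ! i"
    using assms(2) by (auto simp: in_set_conv_nth)
  show ?thesis
    using assms(1) i sorted_wrt_nth_less[of "(\<ge>)" r 0 i]
    by (cases "i = 0") (auto simp: arith_struct_Kn_def)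
qed

lemma arith_struct_Kn_exists_smaller:
  assumes "arith_struct_Kn n r" "r ! 0 \<noteq> 1"
  shows "\<exists>x\<in>set r. x < r ! 0"
proof (rule ccontr)
  assume "\<not> ?thesis"
  then have "set r \<subseteq> {r ! 0}"
    using arith_struct_Kn_le_head[OF assms(1)] by force
  moreover have "r \<noteq> []"
    using assms(1) by (auto simp: arith_struct_Kn_def)
  ultimately have "set r = {r ! 0}"
    by (metis set_empty subset_singletonD)
  then show False
    using assms by (simp add: arith_struct_Kn_def)
qed

lemma arith_struct_Kn_smallest_prime_factor_bound:
  assumes r: "arith_struct_Kn n r" and two_le_head: "2 \<le> r ! 0"
  shows "\<exists>m\<le>n. smallest_prime_factor (r ! 0) \<le> m * (n + 1 - m)"
proof -
  define c where "c = r ! 0"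
  define p where "p = smallest_prime_factor c"
  define xs where "xs = filter (\<lambda>x. x < c) r"
  define m where "m = length xs"
  have len: "length r = n" and pos: "\<And>x. x \<in> set r \<Longrightarrow> 0 < x"
    and dvd_sum: "\<And>x. x \<in> set r \<Longrightarrow> x dvd sum_list r"
    using r by (auto simp: arith_struct_Kn_def in_set_conv_nth)
  have "r \<noteq> []"
    using r by (auto simp: arith_struct_Kn_def)
  then obtain k where k: "sum_list r = k * c"
    using dvd_sum[of c] unfolding c_def by (metis dvdE mult.commute nth_mem length_greater_0_conv)
  have "x = c" if "x \<in> set r" "\<not> x < c" for x
    using arith_struct_Kn_le_head[OF r that(1)] that(2) unfolding c_def by linarith
  then have "filter (\<lambda>x. \<not> x < c) r = replicate (n - m) c"
    using sum_length_filter_compl[of "\<lambda>x. x < c" r] len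
    by (intro replicate_eqI) (auto simp: m_def xs_def)
  then have sum_split: "k * c = (n - m) * c + sum_list xs"
    using sum_list_filter_add_filter_not[of "\<lambda>x. x < c" r] k
    by (simp add: xs_def sum_list_replicate)
  have "xs \<noteq> []"
    using arith_struct_Kn_exists_smaller[OF r] two_le_head unfolding xs_def c_def
    by (auto simp: filter_empty_conv)
  then obtain x where "x \<in> set xs"
    by (metis last_in_set)
  then have "0 < sum_list xs"
    using pos[of x] member_le_sum_list[of x xs] unfolding xs_def by simp
  then have "(n - m) * c < k * c"
    using sum_split by linarith
  then have "n - m < k" and "0 < k * c"
    by simp_all
  have "p * x \<le> k * c" if "x \<in> set xs" for x
  proof -
    have "x \<in> set r" "x < c"
      using that unfolding xs_def by simp_all
    then show ?thesis
      using smallest_prime_factor_mult_le_common_multiple[of x "k * c" c] dvd_sum[of x] pos[of x]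
        \<open>0 < k * c\<close> k unfolding p_def by simp
  qed
  then have "(\<Sum>x\<leftarrow>xs. p * x) \<le> (\<Sum>x\<leftarrow>xs. k * c)"
    by (rule sum_list_mono)
  then have small_sum: "p * sum_list xs \<le> m * (k * c)"
    by (simp add: sum_list_const_mult m_def sum_list_triv mult.left_commute)
  have "(p * k) * c = p * (n - m) * c + p * sum_list xs"
    using arg_cong[OF sum_split, of "(*) p"] by (simp add: algebra_simps)
  also have "\<dots> \<le> p * (n - m) * c + m * (k * c)"
    using small_sum by simp
  also have "\<dots> = (p * (n - m) + m * k) * c"
    by (simp add: algebra_simps)
  finally have "p * k \<le> p * (n - m) + m * k"
    using two_le_head unfolding c_def by simp
  then have "p \<le> m * (n - m + 1)"
    by (rule mult_le_of_mult_le_add[OF \<open>n - m < k\<close>])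
  moreover have "m \<le> n"
    using len unfolding m_def xs_def by (metis length_filter_le)
  ultimately show ?thesis
    unfolding p_def c_def by (metis Suc_diff_le Suc_eq_plus1 add.commute)
qed

theorem theorem3p1:
  fixes n c :: nat
  assumes "0 < n"
    and "2 \<le> c"
    and "real (smallest_prime_factor c) > real ((n + 1)^2) / 4"
  shows "\<not> (\<exists>r. arith_struct_Kn n r \<and> r ! 0 = c)"
proof
  assume "\<exists>r. arith_struct_Kn n r \<and> r ! 0 = c"
  then obtain m where "m \<le> n" and "smallest_prime_factor c \<le> m * (n + 1 - m)"
    using arith_struct_Kn_smallest_prime_factor_bound assms(2) by blast
  then have "4 * smallest_prime_factor c \<le> (n + 1)\<^sup>2"
    using four_mult_diff_le_square[of m "n + 1"] by linarith
  then have "4 * real (smallest_prime_factor c) \<le> real ((n + 1)\<^sup>2)"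
    by (metis of_nat_le_iff of_nat_mult of_nat_numeral)
  then show False
    using assms(3) by linarith
qed

end
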